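(* Let $X$ be a normed space and $Y$ a Banach space, and let $l\in\{-1,1\}$. Suppose that an odd mapping $f:X\to Y$ satisfies $\|D_f(x,y)\|\le\phi(x,y)$ for all $x,y\in X$, where $\phi:X\times X\to[0,\infty)$ is a function such that $$\sum_{i=1}^{\infty}8^{il}\phi\left(\frac{x}{2^{il}},\frac{x}{2^{il}}\right)<\infty$$ for all $x\in X$ and $\lim_{n\to\infty}8^{ln}\phi\left(\frac{x}{2^{ln}},\frac{y}{2^{ln}}\right)=0$ for all $x,y\in X$. Then the limit $$C(x)=\lim_{n\to\infty}8^{ln}\left[f\left(\frac{x}{2^{l(n-l)}}\right)-2f\left(\frac{x}{2^{ln}}\right)\right]$$ exists for all $x\in X$, and $C:X\to Y$ is the unique cubic mapping which satisfies $$3C(x+3y)-C(3x+y)=12[C(x+y)+C(x-y)]-16[C(x)+C(y)]+12C(2y)-4C(2x)\quad(x,y\in X)$$ and $$\|f(2x)-2f(x)-C(x)\|\le\frac12\sum_{i=\frac{|l-1|}{2}}^{\infty}8^{il}\phi\left(\frac{x}{2^{l(i+l)}},\frac{x}{2^{l(i+l)}}\right)$$ for all $x\in X$ (the summation starts at $i=0$ if $l=1$ and at $i=1$ if $l=-1$).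
   Context: For a mapping $f:X\to Y$ define $$D_f(x,y)=3f(x+3y)-f(3x+y)-12[f(x+y)+f(x-y)]+16[f(x)+f(y)]-12f(2y)+4f(2x)$$ for $x,y\in X$. A mapping $g:X\to Y$ is called cubic if $g(x+2y)-3g(x+y)+3g(x)-g(x-y)=6g(y)$ for all $x,y\in X$. *)

theory Defs
  imports "HOL-Analysis.Analysis"
begin

definition Dfun :: "('a::real_normed_vector \<Rightarrow> 'b::real_normed_vector) \<Rightarrow> 'a \<Rightarrow> 'a \<Rightarrow> 'b" where
  "Dfun f x y = 3 *\<^sub>R f (x + 3 *\<^sub>R y) - f (3 *\<^sub>R x + y)
      - 12 *\<^sub>R (f (x + y) + f (x - y)) + 16 *\<^sub>R (f x + f y)
      - 12 *\<^sub>R f (2 *\<^sub>R y) + 4 *\<^sub>R f (2 *\<^sub>R x)"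

definition cubic :: "('a::real_normed_vector \<Rightarrow> 'b::real_normed_vector) \<Rightarrow> bool" where
  "cubic g \<longleftrightarrow> (\<forall>x y. g (x + 2 *\<^sub>R y) - 3 *\<^sub>R g (x + y) + 3 *\<^sub>R g x - g (x - y) = 6 *\<^sub>R g y)"

end

theory Submission
  imports Defs
begin

text \<open>Put g(x) = f(2x) - 2 f(x), which removes the additive part of f. On the diagonal,
  D_f(x,x) = 2 (g(2x) - 8 g(x)), so g is 8-homogeneous up to phi(x,x)/2. With c = 8^l and s = 2^-l the
  scaled iterates c^n g(s^n x) therefore have summable increments (Hyers' direct method); their limit C
  satisfies c C(s x) = C(x), i.e. C(2x) = 8 C(x), is odd, and has D_C = 0 because c^n D_g(s^n x, s^n y)
  tends to 0. An odd solution of D_C = 0 with C(2x) = 8 C(x) is cubic. Any cubic C' obeying the same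
  bound also satisfies c C'(s x) = C'(x), so C' - C = c^n (C' - C)(s^n x) is bounded by twice a tail of
  the error series and vanishes.\<close>

section \<open>Convergence of scaled iterates\<close>

lemma telescoping_LIMSEQ:
  fixes a :: "nat \<Rightarrow> 'b::banach"
  assumes b: "summable b" and le: "\<And>n. norm (a (Suc n) - a n) \<le> b n"
  shows "\<exists>L. a \<longlonglongrightarrow> L \<and> norm (a 0 - L) \<le> suminf b"
proof -
  define d where "d n = a (Suc n) - a n" for n
  have "summable (\<lambda>n. norm (d n))"
    by (rule summable_comparison_test'[OF b, where N = 0]) (simp add: d_def le)
  then have "summable d" by (rule summable_norm_cancel)
  have telescope: "(\<lambda>n. a 0 + (\<Sum>k<n. d k)) = a"
    by (simp add: d_def sum_lessThan_telescope)
  have "(\<lambda>n. a 0 + (\<Sum>k<n. d k)) \<longlonglongrightarrow> a 0 + suminf d"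
    by (intro tendsto_add tendsto_const summable_LIMSEQ \<open>summable d\<close>)
  then have "a \<longlonglongrightarrow> a 0 + suminf d" unfolding telescope .
  moreover have "norm (suminf d) \<le> suminf b"
    using \<open>summable (\<lambda>n. norm (d n))\<close> b le
    by (intro order_trans[OF summable_norm suminf_le]) (auto simp: d_def)
  ultimately show ?thesis by force
qed

lemma suminf_tail_LIMSEQ_0:
  fixes u :: "nat \<Rightarrow> real"
  assumes "summable u"
  shows "(\<lambda>n. \<Sum>j. u (j + n)) \<longlonglongrightarrow> 0"
proof -
  have "(\<lambda>n. suminf u - sum u {..<n}) \<longlonglongrightarrow> suminf u - suminf u"
    by (intro tendsto_intros summable_LIMSEQ assms)
  then show ?thesis
    by (simp add: suminf_minus_initial_segment[OF assms])
qed

lemma invariant_funpow: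
  fixes F :: "'a \<Rightarrow> 'b::real_vector"
  assumes "\<And>x. c *\<^sub>R F (h x) = F x"
  shows "c ^ n *\<^sub>R F ((h ^^ n) x) = F x"
proof (induction n)
  case (Suc n)
  have "c ^ Suc n *\<^sub>R F ((h ^^ Suc n) x) = c ^ n *\<^sub>R (c *\<^sub>R F (h ((h ^^ n) x)))"
    by simp
  also have "\<dots> = F x" using assms Suc.IH by simp
  finally show ?case .
qed simp

lemma funpow_scaleR:
  fixes x :: "'a::real_vector"
  shows "((*\<^sub>R) s ^^ n) x = s ^ n *\<^sub>R x"
  by (induction n) simp_all

lemma scaled_iterates_LIMSEQ:
  fixes g :: "'a \<Rightarrow> 'b::banach"
  assumes "c \<ge> 0"
    and step: "\<And>z. norm (c *\<^sub>R g (h z) - g z) \<le> \<psi> z"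
    and "summable (\<lambda>n. c ^ n * \<psi> ((h ^^ n) x))"
  shows "\<exists>L. (\<lambda>n. c ^ n *\<^sub>R g ((h ^^ n) x)) \<longlonglongrightarrow> L
           \<and> norm (g x - L) \<le> (\<Sum>n. c ^ n * \<psi> ((h ^^ n) x))"
proof -
  have "norm (c ^ Suc n *\<^sub>R g ((h ^^ Suc n) x) - c ^ n *\<^sub>R g ((h ^^ n) x))
        \<le> c ^ n * \<psi> ((h ^^ n) x)" for n
  proof -
    have "c ^ Suc n *\<^sub>R g ((h ^^ Suc n) x) - c ^ n *\<^sub>R g ((h ^^ n) x)
        = c ^ n *\<^sub>R (c *\<^sub>R g (h ((h ^^ n) x)) - g ((h ^^ n) x))"
      by (simp add: scaleR_right_diff_distrib)
    then show ?thesis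
      using \<open>c \<ge> 0\<close> step by (simp add: mult_left_mono)
  qed
  from telescoping_LIMSEQ[where a = "\<lambda>n. c ^ n *\<^sub>R g ((h ^^ n) x)", OF assms(3) this] show ?thesis
    by simp
qed

lemma scaled_iterates_limit_invariant:
  fixes C :: "'a \<Rightarrow> 'b::real_normed_vector"
  assumes "\<And>x. (\<lambda>n. c ^ n *\<^sub>R g ((h ^^ n) x)) \<longlonglongrightarrow> C x"
  shows "c *\<^sub>R C (h x) = C x"
proof -
  have "(\<lambda>n. c *\<^sub>R (c ^ n *\<^sub>R g ((h ^^ n) (h x)))) \<longlonglongrightarrow> c *\<^sub>R C (h x)"
    by (intro tendsto_scaleR tendsto_const assms)
  moreover have "(\<lambda>n. c *\<^sub>R (c ^ n *\<^sub>R g ((h ^^ n) (h x)))) = (\<lambda>n. c ^ Suc n *\<^sub>R g ((h ^^ Suc n) x))"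
    by (simp add: funpow_swap1)
  moreover have "(\<lambda>n. c ^ Suc n *\<^sub>R g ((h ^^ Suc n) x)) \<longlonglongrightarrow> C x"
    using assms by (rule LIMSEQ_Suc)
  ultimately show ?thesis
    using LIMSEQ_unique by metis
qed

lemma invariant_approximation_unique:
  fixes C C' g :: "'a \<Rightarrow> 'b::real_normed_vector"
  assumes "c \<ge> 0"
    and summable: "\<And>x. summable (\<lambda>n. c ^ n * \<psi> ((h ^^ n) x))"
    and inv: "\<And>x. c *\<^sub>R C (h x) = C x" and inv': "\<And>x. c *\<^sub>R C' (h x) = C' x"
    and near: "\<And>x. norm (g x - C x) \<le> (\<Sum>n. c ^ n * \<psi> ((h ^^ n) x))"
    and near': "\<And>x. norm (g x - C' x) \<le> (\<Sum>n. c ^ n * \<psi> ((h ^^ n) x))"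
  shows "C' = C"
proof
  fix x
  define tail where "tail n = (\<Sum>j. c ^ (j + n) * \<psi> ((h ^^ (j + n)) x))" for n
  have "norm (C' x - C x) \<le> 2 * tail n" for n
  proof -
    define y where "y = (h ^^ n) x"
    have "C' x - C x = c ^ n *\<^sub>R ((g y - C y) - (g y - C' y))"
      using invariant_funpow[of c C' h n x, OF inv'] invariant_funpow[of c C h n x, OF inv]
      by (simp add: y_def algebra_simps)
    also have "norm \<dots> \<le> c ^ n * (2 * (\<Sum>j. c ^ j * \<psi> ((h ^^ j) y)))"
      using \<open>c \<ge> 0\<close> near[of y] near'[of y] norm_triangle_ineq4[of "g y - C y" "g y - C' y"]
      by (simp add: mult_left_mono)
    also have "\<dots> = 2 * tail n"
      using suminf_mult[OF summable[of y], of "c ^ n"]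
      by (simp add: tail_def y_def funpow_add power_add mult_ac)
    finally show ?thesis .
  qed
  moreover have "(\<lambda>n. 2 * tail n) \<longlonglongrightarrow> 2 * 0"
    unfolding tail_def by (intro tendsto_mult tendsto_const suminf_tail_LIMSEQ_0 summable)
  ultimately have "norm (C' x - C x) \<le> 0"
    by (intro LIMSEQ_le_const[of "\<lambda>n. 2 * tail n"]) auto
  then show "C' x = C x" by simp
qed

section \<open>The functional equation\<close>

definition doubling_defect :: "('a::real_vector \<Rightarrow> 'b::real_vector) \<Rightarrow> 'a \<Rightarrow> 'b" where
  "doubling_defect f x = f (2 *\<^sub>R x) - 2 *\<^sub>R f x"

lemma Dfun_eq_0_iff:
  "Dfun C x y = 0 \<longleftrightarrow>
     3 *\<^sub>R C (x + 3 *\<^sub>R y) - C (3 *\<^sub>R x + y)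
       = 12 *\<^sub>R (C (x + y) + C (x - y)) - 16 *\<^sub>R (C x + C y)
         + 12 *\<^sub>R C (2 *\<^sub>R y) - 4 *\<^sub>R C (2 *\<^sub>R x)"
proof -
  have "Dfun C x y = (3 *\<^sub>R C (x + 3 *\<^sub>R y) - C (3 *\<^sub>R x + y))
       - (12 *\<^sub>R (C (x + y) + C (x - y)) - 16 *\<^sub>R (C x + C y)
         + 12 *\<^sub>R C (2 *\<^sub>R y) - 4 *\<^sub>R C (2 *\<^sub>R x))"
    unfolding Dfun_def by (simp add: algebra_simps)
  then show ?thesis by simp
qed

lemma Dfun_diagonal:
  fixes f :: "'a::real_normed_vector \<Rightarrow> 'b::real_normed_vector"
  assumes "f 0 = 0"
  shows "Dfun f z z = 2 *\<^sub>R (doubling_defect f (2 *\<^sub>R z) - 8 *\<^sub>R doubling_defect f z)"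
proof -
  have "z + 3 *\<^sub>R z = 4 *\<^sub>R z" "3 *\<^sub>R z + z = 4 *\<^sub>R z" "z + z = 2 *\<^sub>R z"
    by norm+
  with assms show ?thesis
    unfolding Dfun_def doubling_defect_def by simp norm
qed

lemma norm_doubling_defect_step:
  fixes f :: "'a::real_normed_vector \<Rightarrow> 'b::real_normed_vector"
  assumes odd: "\<And>x. f (- x) = - f x" and approx: "\<And>x y. norm (Dfun f x y) \<le> \<phi> x y"
  shows "norm (doubling_defect f (2 *\<^sub>R z) - 8 *\<^sub>R doubling_defect f z) \<le> \<phi> z z / 2"
proof -
  have "f 0 = 0"
    using odd[of 0] by (metis scaleR_2 scaleR_eq_0_iff eq_neg_iff_add_eq_0 zero_neq_numeral)
  then have "norm (Dfun f z z) = 2 * norm (doubling_defect f (2 *\<^sub>R z) - 8 *\<^sub>R doubling_defect f z)"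
    by (simp add: Dfun_diagonal)
  with approx[of z z] show ?thesis by simp
qed

lemma Dfun_doubling_defect:
  "Dfun (doubling_defect f) x y = Dfun f (2 *\<^sub>R x) (2 *\<^sub>R y) - 2 *\<^sub>R Dfun f x y"
  unfolding Dfun_def doubling_defect_def by (simp add: algebra_simps)

lemma Dfun_scaled:
  "Dfun (\<lambda>z. c *\<^sub>R g (r *\<^sub>R z)) x y = c *\<^sub>R Dfun g (r *\<^sub>R x) (r *\<^sub>R y)"
  unfolding Dfun_def by (simp add: algebra_simps)

lemma eq_by_linear_combination:
  fixes L R :: "'b::real_vector"
  assumes "L1 = R1" "L2 = R2" "L3 = R3"
    and "L - R = a *\<^sub>R (L1 - R1) + b *\<^sub>R (L2 - R2) + c *\<^sub>R (L3 - R3)"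
  shows "L = R"
  using assms by simp

lemma cubic_hom:
  fixes F :: "'a::real_normed_vector \<Rightarrow> 'b::real_normed_vector"
  assumes "cubic F"
  shows "F (2 *\<^sub>R x) = 8 *\<^sub>R F x"
proof -
  have eq: "F (x + 2 *\<^sub>R y) - 3 *\<^sub>R F (x + y) + 3 *\<^sub>R F x - F (x - y) = 6 *\<^sub>R F y" for x y
    using assms unfolding cubic_def by blast
  have zero: "F 0 = 0" using eq[of 0 0] by simp
  have at_0: "F (2 *\<^sub>R y) - 3 *\<^sub>R F y + 3 *\<^sub>R F 0 - F (- y) = 6 *\<^sub>R F y" for y
    using eq[of 0 y] by simp
  have at_0': "F (2 *\<^sub>R (- x)) - 3 *\<^sub>R F (- x) + 3 *\<^sub>R F 0 - F x = 6 *\<^sub>R F (- x)"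
    using at_0[of "- x"] by simp
  have "- x + 2 *\<^sub>R x = x" "- x + x = 0" "- x - x = 2 *\<^sub>R (- x)"
    by norm+
  then have "F x - 3 *\<^sub>R F 0 + 3 *\<^sub>R F (- x) - F (2 *\<^sub>R (- x)) = 6 *\<^sub>R F x"
    using eq[of "- x" x] by simp
  then have odd: "F (- x) = - F x"
    by (rule eq_by_linear_combination[OF at_0' _ zero, where a = "-1/6" and b = "-1/6" and c = 0]) norm
  show ?thesis
    by (rule eq_by_linear_combination[OF at_0[of x] zero odd, where a = 1 and b = "-3" and c = 1]) norm
qed

lemma cubic_if_Dfun_eq_0:
  fixes C :: "'a::real_normed_vector \<Rightarrow> 'b::real_normed_vector"
  assumes D: "\<And>x y. Dfun C x y = 0"
    and odd: "\<And>x. C (- x) = - C x" and hom: "\<And>x. C (2 *\<^sub>R x) = 8 *\<^sub>R C x"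
  shows "cubic C"
  unfolding cubic_def
proof (intro allI)
  fix x y :: 'a
  have dbl: "C a = 8 *\<^sub>R C b" if "a = 2 *\<^sub>R b" for a b
    using that hom by simp
  have neg_dbl: "C a = - (8 *\<^sub>R C b)" if "a = - (2 *\<^sub>R b)" for a b
    using that hom odd by simp
  have p1: "C ((y - x) + 3 *\<^sub>R (x + y)) = 8 *\<^sub>R C (x + 2 *\<^sub>R y)" by (rule dbl) norm
  have p2: "C (3 *\<^sub>R (y - x) + (x + y)) = - (8 *\<^sub>R C (x - 2 *\<^sub>R y))" by (rule neg_dbl) norm
  have p3: "C ((y - x) + (x + y)) = 8 *\<^sub>R C y" by (rule dbl) norm
  have p4: "C ((y - x) - (x + y)) = - (8 *\<^sub>R C x)" by (rule neg_dbl) norm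
  have p5: "C (y - x) = - C (x - y)" by (metis odd minus_diff_eq)
  have p6: "C (2 *\<^sub>R (x + y)) = 8 *\<^sub>R C (x + y)" by (rule hom)
  have p7: "C (2 *\<^sub>R (y - x)) = - (8 *\<^sub>R C (x - y))" by (rule neg_dbl) norm
  have D1: "Dfun C (y - x) (x + y) = 24 *\<^sub>R C (x + 2 *\<^sub>R y) + 8 *\<^sub>R C (x - 2 *\<^sub>R y)
      - 96 *\<^sub>R C y + 96 *\<^sub>R C x - 80 *\<^sub>R C (x + y) - 48 *\<^sub>R C (x - y)"
    unfolding Dfun_def p1 p2 p3 p4 p5 p6 p7 by norm
  have q1: "C ((- x - y) + 3 *\<^sub>R (x - y)) = 8 *\<^sub>R C (x - 2 *\<^sub>R y)" by (rule dbl) norm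
  have q2: "C (3 *\<^sub>R (- x - y) + (x - y)) = - (8 *\<^sub>R C (x + 2 *\<^sub>R y))" by (rule neg_dbl) norm
  have q3: "C ((- x - y) + (x - y)) = - (8 *\<^sub>R C y)" by (rule neg_dbl) norm
  have q4: "C ((- x - y) - (x - y)) = - (8 *\<^sub>R C x)" by (rule neg_dbl) norm
  have q5: "C (- x - y) = - C (x + y)" by (metis odd minus_add_distrib diff_conv_add_uminus)
  have q6: "C (2 *\<^sub>R (x - y)) = 8 *\<^sub>R C (x - y)" by (rule hom)
  have q7: "C (2 *\<^sub>R (- x - y)) = - (8 *\<^sub>R C (x + y))" by (rule neg_dbl) norm
  have D2: "Dfun C (- x - y) (x - y) = 8 *\<^sub>R C (x + 2 *\<^sub>R y) + 24 *\<^sub>R C (x - 2 *\<^sub>R y)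
      + 96 *\<^sub>R C y + 96 *\<^sub>R C x - 48 *\<^sub>R C (x + y) - 80 *\<^sub>R C (x - y)"
    unfolding Dfun_def q1 q2 q3 q4 q5 q6 q7 by norm
  txt \<open>\<open>3 D1 - D2\<close> is 64 times the cubic equation.\<close>
  show "C (x + 2 *\<^sub>R y) - 3 *\<^sub>R C (x + y) + 3 *\<^sub>R C x - C (x - y) = 6 *\<^sub>R C y"
    by (rule eq_by_linear_combination[OF D[of "y - x" "x + y"] D[of "- x - y" "x - y"] refl, where a = "3/64" and b = "-1/64" and c = 0])
      (unfold D1 D2, norm)
qed

lemma hom8_iff_scaling_invariant:
  fixes F :: "'a::real_vector \<Rightarrow> 'b::real_vector"
  assumes "s = 2 \<or> s = 1/2"
  shows "(\<forall>x. inverse (s ^ 3) *\<^sub>R F (s *\<^sub>R x) = F x) \<longleftrightarrow> (\<forall>x. F (2 *\<^sub>R x) = 8 *\<^sub>R F x)"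
proof (cases "s = 2")
  case False
  with assms have s: "s = 1/2" by simp
  have "(\<forall>x. 8 *\<^sub>R F ((1/2) *\<^sub>R x) = F x) \<longleftrightarrow> (\<forall>x. F (2 *\<^sub>R x) = 8 *\<^sub>R F x)"
  proof (intro iffI allI)
    fix x
    assume "\<forall>x. 8 *\<^sub>R F ((1/2) *\<^sub>R x) = F x"
    then show "F (2 *\<^sub>R x) = 8 *\<^sub>R F x"
      by (metis scaleR_scaleR scaleR_one nonzero_divide_eq_eq zero_neq_numeral)
  next
    fix x
    assume "\<forall>x. F (2 *\<^sub>R x) = 8 *\<^sub>R F x"
    then show "8 *\<^sub>R F ((1/2) *\<^sub>R x) = F x"
      by (metis scaleR_scaleR scaleR_one nonzero_divide_eq_eq zero_neq_numeral mult.commute)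
  qed
  then show ?thesis unfolding s by (simp add: power_divide)
next
  case True
  have "(1/8::real) *\<^sub>R a = b \<longleftrightarrow> a = 8 *\<^sub>R b" for a b :: 'b
    by auto
  with True show ?thesis by simp
qed

lemma odd_if_LIMSEQ:
  fixes G :: "nat \<Rightarrow> 'a::real_vector \<Rightarrow> 'b::real_normed_vector"
  assumes "\<And>x. (\<lambda>n. G n x) \<longlonglongrightarrow> C x" and "\<And>n x. G n (- x) = - G n x"
  shows "C (- x) = - C x"
proof -
  have "(\<lambda>n. G n (- x)) \<longlonglongrightarrow> - C x"
    unfolding assms(2) by (intro tendsto_minus assms(1))
  with assms(1) show ?thesis by (rule LIMSEQ_unique)
qed

lemma Dfun_eq_0_if_LIMSEQ:
  fixes g C :: "'a::real_normed_vector \<Rightarrow> 'b::real_normed_vector"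
  assumes conv: "\<And>x. (\<lambda>n. c n *\<^sub>R g (r n *\<^sub>R x)) \<longlonglongrightarrow> C x"
    and "(\<lambda>n. c n *\<^sub>R Dfun g (r n *\<^sub>R x) (r n *\<^sub>R y)) \<longlonglongrightarrow> 0"
  shows "Dfun C x y = 0"
proof -
  have "(\<lambda>n. Dfun (\<lambda>z. c n *\<^sub>R g (r n *\<^sub>R z)) x y) \<longlonglongrightarrow> Dfun C x y"
    unfolding Dfun_def by (intro tendsto_intros conv)
  with assms(2) show ?thesis
    unfolding Dfun_scaled using LIMSEQ_unique by blast
qed

section \<open>Stability\<close>

lemma doubling_defect_odd:
  assumes "\<And>x. f (- x) = - f x"
  shows "doubling_defect f (- x) = - doubling_defect f x"
  using assms[of x] assms[of "2 *\<^sub>R x"] by (simp add: doubling_defect_def)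

lemma norm_Dfun_doubling_defect_le:
  fixes f :: "'a::real_normed_vector \<Rightarrow> 'b::real_normed_vector"
  assumes "\<And>x y. norm (Dfun f x y) \<le> \<phi> x y"
  shows "norm (Dfun (doubling_defect f) x y) \<le> \<phi> (2 *\<^sub>R x) (2 *\<^sub>R y) + 2 * \<phi> x y"
  unfolding Dfun_doubling_defect
  using norm_triangle_ineq4[of "Dfun f (2 *\<^sub>R x) (2 *\<^sub>R y)" "2 *\<^sub>R Dfun f x y"] assms[of x y]
    assms[of "2 *\<^sub>R x" "2 *\<^sub>R y"]
  by simp

lemma cubic_stability:
  fixes f :: "'a::real_normed_vector \<Rightarrow> 'b::banach"
  assumes s: "s = 2 \<or> s = 1/2" and c: "c = inverse (s ^ 3)"
    and odd: "\<And>x. f (- x) = - f x"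
    and approx: "\<And>x y. norm (Dfun f x y) \<le> \<phi> x y"
    and step: "\<And>z. norm (c *\<^sub>R doubling_defect f (s *\<^sub>R z) - doubling_defect f z) \<le> \<psi> z"
    and summable: "\<And>x. summable (\<lambda>n. c ^ n * \<psi> (s ^ n *\<^sub>R x))"
    and lim0: "\<And>x y. (\<lambda>n. c ^ n * \<phi> (s ^ n *\<^sub>R x) (s ^ n *\<^sub>R y)) \<longlonglongrightarrow> 0"
  shows "\<exists>C. (\<forall>x. (\<lambda>n. c ^ n *\<^sub>R doubling_defect f (s ^ n *\<^sub>R x)) \<longlonglongrightarrow> C x)
     \<and> cubic C \<and> (\<forall>x y. Dfun C x y = 0)
     \<and> (\<forall>x. norm (doubling_defect f x - C x) \<le> (\<Sum>n. c ^ n * \<psi> (s ^ n *\<^sub>R x)))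
     \<and> (\<forall>C'. cubic C' \<and> (\<forall>x. norm (doubling_defect f x - C' x) \<le> (\<Sum>n. c ^ n * \<psi> (s ^ n *\<^sub>R x)))
          \<longrightarrow> C' = C)"
proof -
  let ?g = "doubling_defect f"
  have "c \<ge> 0" using s c by auto
  have limit: "\<exists>L. (\<lambda>n. c ^ n *\<^sub>R ?g (s ^ n *\<^sub>R x)) \<longlonglongrightarrow> L
      \<and> norm (?g x - L) \<le> (\<Sum>n. c ^ n * \<psi> (s ^ n *\<^sub>R x))" for x
    using scaled_iterates_LIMSEQ[of c ?g "(*\<^sub>R) s" \<psi> x] \<open>c \<ge> 0\<close> step summable
    by (simp add: funpow_scaleR)
  define C where "C x = lim (\<lambda>n. c ^ n *\<^sub>R ?g (s ^ n *\<^sub>R x))" for x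
  have conv: "(\<lambda>n. c ^ n *\<^sub>R ?g (s ^ n *\<^sub>R x)) \<longlonglongrightarrow> C x"
    and near: "norm (?g x - C x) \<le> (\<Sum>n. c ^ n * \<psi> (s ^ n *\<^sub>R x))" for x
  proof -
    obtain L where L: "(\<lambda>n. c ^ n *\<^sub>R ?g (s ^ n *\<^sub>R x)) \<longlonglongrightarrow> L"
      and "norm (?g x - L) \<le> (\<Sum>n. c ^ n * \<psi> (s ^ n *\<^sub>R x))"
      using limit by blast
    moreover have "C x = L"
      unfolding C_def using L by (rule limI)
    ultimately show "(\<lambda>n. c ^ n *\<^sub>R ?g (s ^ n *\<^sub>R x)) \<longlonglongrightarrow> C x"
      and "norm (?g x - C x) \<le> (\<Sum>n. c ^ n * \<psi> (s ^ n *\<^sub>R x))" by simp_all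
  qed
  have invariant: "c *\<^sub>R C (s *\<^sub>R x) = C x" for x
    using scaled_iterates_limit_invariant[of c ?g "(*\<^sub>R) s" C x] conv by (simp add: funpow_scaleR)
  then have hom: "C (2 *\<^sub>R x) = 8 *\<^sub>R C x" for x
    using hom8_iff_scaling_invariant[OF s] c by blast
  have C_odd: "C (- x) = - C x" for x
    using conv by (rule odd_if_LIMSEQ) (simp add: doubling_defect_odd[of f, OF odd])
  have D: "Dfun C x y = 0" for x y
  proof (rule Dfun_eq_0_if_LIMSEQ[OF conv])
    have bound: "norm (c ^ n *\<^sub>R Dfun ?g (s ^ n *\<^sub>R x) (s ^ n *\<^sub>R y))
        \<le> c ^ n * \<phi> (s ^ n *\<^sub>R 2 *\<^sub>R x) (s ^ n *\<^sub>R 2 *\<^sub>R y) + 2 * (c ^ n * \<phi> (s ^ n *\<^sub>R x) (s ^ n *\<^sub>R y))" for n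
    proof -
      have "2 *\<^sub>R s ^ n *\<^sub>R z = s ^ n *\<^sub>R 2 *\<^sub>R z" for z :: 'a
        by (simp add: mult.commute)
      then have "norm (Dfun ?g (s ^ n *\<^sub>R x) (s ^ n *\<^sub>R y))
          \<le> \<phi> (s ^ n *\<^sub>R 2 *\<^sub>R x) (s ^ n *\<^sub>R 2 *\<^sub>R y) + 2 * \<phi> (s ^ n *\<^sub>R x) (s ^ n *\<^sub>R y)"
        using norm_Dfun_doubling_defect_le[OF approx] by metis
      from mult_left_mono[OF this zero_le_power[OF \<open>c \<ge> 0\<close>, of n]] show ?thesis
        using \<open>c \<ge> 0\<close> by (simp add: algebra_simps)
    qed
    have "(\<lambda>n. c ^ n * \<phi> (s ^ n *\<^sub>R 2 *\<^sub>R x) (s ^ n *\<^sub>R 2 *\<^sub>R y)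
        + 2 * (c ^ n * \<phi> (s ^ n *\<^sub>R x) (s ^ n *\<^sub>R y))) \<longlonglongrightarrow> 0"
      by (intro tendsto_add_zero tendsto_mult_right_zero lim0)
    then show "(\<lambda>n. c ^ n *\<^sub>R Dfun ?g (s ^ n *\<^sub>R x) (s ^ n *\<^sub>R y)) \<longlonglongrightarrow> 0"
      by (rule Lim_null_comparison[OF always_eventually[OF allI[OF bound]]])
  qed
  have unique: "C' = C" if "cubic C'"
    and near': "\<And>x. norm (?g x - C' x) \<le> (\<Sum>n. c ^ n * \<psi> (s ^ n *\<^sub>R x))" for C'
  proof -
    have "c *\<^sub>R C' (s *\<^sub>R x) = C' x" for x
      using hom8_iff_scaling_invariant[OF s] c cubic_hom[OF \<open>cubic C'\<close>] by blast
    then show ?thesis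
      using invariant_approximation_unique[of c \<psi> "(*\<^sub>R) s" C C' ?g] \<open>c \<ge> 0\<close> summable invariant near near'
      by (simp add: funpow_scaleR)
  qed
  show ?thesis
    using conv cubic_if_Dfun_eq_0[OF D C_odd hom] D near unique by blast
qed

section \<open>Dyadic scaling with exponent l\<close>

definition stability_term :: "int \<Rightarrow> ('a::real_vector \<Rightarrow> 'a \<Rightarrow> real) \<Rightarrow> 'a \<Rightarrow> nat \<Rightarrow> real" where
  "stability_term l \<phi> x i = (8::real) powi (int i * l) *
     \<phi> (inverse ((2::real) powi (l * (int i + l))) *\<^sub>R x) (inverse ((2::real) powi (l * (int i + l))) *\<^sub>R x)"

lemma dyadic_scaling:
  fixes l :: int
  assumes "l \<in> {-1, 1}"
  shows "inverse ((2::real) powi l) = 2 \<or> inverse ((2::real) powi l) = 1/2"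
    and "(8::real) powi l = inverse (inverse ((2::real) powi l) ^ 3)"
  using assms by (auto simp: power_int_minus field_simps)

lemma dyadic_powers:
  "((8::real) powi l) ^ n = 8 powi (l * int n)"
  "(inverse ((2::real) powi l)) ^ n = inverse (2 powi (l * int n))"
  by (simp_all add: power_int_power' power_inverse)

lemma doubling_defect_dyadic_iterate:
  fixes l :: int
  assumes "l \<in> {-1, 1}"
  shows "(8::real) powi (l * int n) *\<^sub>R (f (inverse ((2::real) powi (l * (int n - l))) *\<^sub>R x)
      - 2 *\<^sub>R f (inverse ((2::real) powi (l * int n)) *\<^sub>R x))
    = ((8::real) powi l) ^ n *\<^sub>R doubling_defect f (inverse ((2::real) powi l) ^ n *\<^sub>R x)"
proof -
  have "inverse ((2::real) powi (l * (int n - l))) = 2 * inverse ((2::real) powi (l * int n))"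
    using assms by (auto simp: power_int_diff power_int_add power_int_minus field_simps)
  then show ?thesis by (simp add: doubling_defect_def dyadic_powers)
qed

lemma stability_term_scaled:
  "((8::real) powi l) ^ n * stability_term l \<phi> (inverse ((2::real) powi l) ^ n *\<^sub>R x) e
     = stability_term l \<phi> x (n + e)"
proof -
  have "int (n + e) * l = l * int n + int e * l" "l * (int (n + e) + l) = l * (int e + l) + l * int n"
    by (simp_all add: algebra_simps)
  then show ?thesis
    unfolding stability_term_def
    by (simp add: power_int_add power_int_power' power_int_inverse[symmetric] mult.commute)
qed

lemma summable_stability_term:
  fixes l :: int
  assumes l: "l \<in> {-1, 1}"
    and summ: "summable (\<lambda>i. (8::real) powi (int (i + 1) * l) *
                 \<phi> (inverse ((2::real) powi (int (i + 1) * l)) *\<^sub>R x)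
                   (inverse ((2::real) powi (int (i + 1) * l)) *\<^sub>R x))"
  shows "summable (\<lambda>n. stability_term l \<phi> x (n + nat (\<bar>l - 1\<bar> div 2)))"
proof -
  from l consider "l = 1" | "l = -1" by auto
  then show ?thesis
  proof cases
    case 1
    then have "summable (\<lambda>i. 8 * stability_term l \<phi> x i)"
      using summ by (simp add: stability_term_def mult.assoc add.commute[of "int _" 1] flip: of_nat_Suc)
    with 1 show ?thesis by simp
  next
    case 2
    have shift: "int (i + 2) * l = int (i + 1) * l - 1" "l * (int (i + 2) + l) = int (i + 1) * l"
      for i using 2 by simp_all
    have "summable (\<lambda>i. 8 * stability_term l \<phi> x (i + 2))"
      using summ unfolding stability_term_def shift by (simp add: power_int_diff mult.assoc)
    with 2 show ?thesis
      using summable_Suc_iff[of "\<lambda>n. stability_term l \<phi> x (Suc n)"] by simp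
  qed
qed

lemma norm_doubling_defect_dyadic_step:
  fixes f :: "'a::real_normed_vector \<Rightarrow> 'b::real_normed_vector" and l :: int
  assumes l: "l \<in> {-1, 1}"
    and odd: "\<And>x. f (- x) = - f x" and approx: "\<And>x y. norm (Dfun f x y) \<le> \<phi> x y"
  shows "norm (8 powi l *\<^sub>R doubling_defect f (inverse (2 powi l) *\<^sub>R z) - doubling_defect f z)
      \<le> 1/2 * stability_term l \<phi> z (nat (\<bar>l - 1\<bar> div 2))"
proof -
  note key = norm_doubling_defect_step[OF odd approx]
  from l consider "l = 1" | "l = -1" by auto
  then show ?thesis
  proof cases
    case 1
    have "z = 2 *\<^sub>R (1/2) *\<^sub>R z" by simp
    then have "norm (8 *\<^sub>R doubling_defect f ((1/2) *\<^sub>R z) - doubling_defect f z)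
        \<le> \<phi> ((1/2) *\<^sub>R z) ((1/2) *\<^sub>R z) / 2"
      using key[of "(1/2) *\<^sub>R z"] by (metis norm_minus_commute)
    with 1 show ?thesis by (simp add: stability_term_def)
  next
    case 2
    have "(1/8) *\<^sub>R doubling_defect f (2 *\<^sub>R z) - doubling_defect f z
        = (1/8) *\<^sub>R (doubling_defect f (2 *\<^sub>R z) - 8 *\<^sub>R doubling_defect f z)"
      by (simp add: scaleR_diff_right)
    then have "norm ((1/8) *\<^sub>R doubling_defect f (2 *\<^sub>R z) - doubling_defect f z)
        = norm (doubling_defect f (2 *\<^sub>R z) - 8 *\<^sub>R doubling_defect f z) / 8"
      by simp
    with 2 key[of z] show ?thesis by (simp add: stability_term_def power_int_minus)
  qed
qed

theorem theorem3p2: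
  fixes f :: "'a::real_normed_vector \<Rightarrow> 'b::banach"
    and \<phi> :: "'a \<Rightarrow> 'a \<Rightarrow> real"
    and l :: int
  assumes l: "l \<in> {-1, 1}"
    and odd: "\<forall>x. f (- x) = - f x"
    and phi_nonneg: "\<forall>x y. \<phi> x y \<ge> 0"
    and approx: "\<forall>x y. norm (Dfun f x y) \<le> \<phi> x y"
    and summ: "\<forall>x. summable (\<lambda>i::nat. (8::real) powi (int (i + 1) * l) *
                 \<phi> (inverse ((2::real) powi (int (i + 1) * l)) *\<^sub>R x)
                   (inverse ((2::real) powi (int (i + 1) * l)) *\<^sub>R x))"
    and lim0: "\<forall>x y. (\<lambda>n::nat. (8::real) powi (l * int n) *
                 \<phi> (inverse ((2::real) powi (l * int n)) *\<^sub>R x)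
                   (inverse ((2::real) powi (l * int n)) *\<^sub>R y)) \<longlonglongrightarrow> 0"
  shows "\<exists>C :: 'a \<Rightarrow> 'b.
     (\<forall>x. (\<lambda>n::nat. (8::real) powi (l * int n) *\<^sub>R
            (f (inverse ((2::real) powi (l * (int n - l))) *\<^sub>R x)
             - 2 *\<^sub>R f (inverse ((2::real) powi (l * int n)) *\<^sub>R x))) \<longlonglongrightarrow> C x)
   \<and> cubic C
   \<and> (\<forall>x y. 3 *\<^sub>R C (x + 3 *\<^sub>R y) - C (3 *\<^sub>R x + y)
         = 12 *\<^sub>R (C (x + y) + C (x - y)) - 16 *\<^sub>R (C x + C y)
           + 12 *\<^sub>R C (2 *\<^sub>R y) - 4 *\<^sub>R C (2 *\<^sub>R x))
   \<and> (\<forall>x. norm (f (2 *\<^sub>R x) - 2 *\<^sub>R f x - C x)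
         \<le> 1/2 * (\<Sum>j. (let i = j + nat (\<bar>l - 1\<bar> div 2) in
              (8::real) powi (int i * l) *
              \<phi> (inverse ((2::real) powi (l * (int i + l))) *\<^sub>R x)
                (inverse ((2::real) powi (l * (int i + l))) *\<^sub>R x))))
   \<and> (\<forall>C' :: 'a \<Rightarrow> 'b. cubic C'
        \<and> (\<forall>x y. 3 *\<^sub>R C' (x + 3 *\<^sub>R y) - C' (3 *\<^sub>R x + y)
             = 12 *\<^sub>R (C' (x + y) + C' (x - y)) - 16 *\<^sub>R (C' x + C' y)
               + 12 *\<^sub>R C' (2 *\<^sub>R y) - 4 *\<^sub>R C' (2 *\<^sub>R x))
        \<and> (\<forall>x. norm (f (2 *\<^sub>R x) - 2 *\<^sub>R f x - C' x)
             \<le> 1/2 * (\<Sum>j. (let i = j + nat (\<bar>l - 1\<bar> div 2) in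
                  (8::real) powi (int i * l) *
                  \<phi> (inverse ((2::real) powi (l * (int i + l))) *\<^sub>R x)
                    (inverse ((2::real) powi (l * (int i + l))) *\<^sub>R x))))
        \<longrightarrow> C' = C)"
proof -
  define s where "s = inverse ((2::real) powi l)"
  define c where "c = (8::real) powi l"
  define e where "e = nat (\<bar>l - 1\<bar> div 2)"
  define \<psi> where "\<psi> z = 1/2 * stability_term l \<phi> z e" for z
  \<comment> \<open>the first term of the error series; its scaled iterates run through the whole series\<close>
  have series: "c ^ n * \<psi> (s ^ n *\<^sub>R x) = 1/2 * stability_term l \<phi> x (n + e)" for n x
    using stability_term_scaled[of l n \<phi> x e] by (simp add: \<psi>_def s_def c_def)
  have summable: "summable (\<lambda>n. stability_term l \<phi> x (n + e))" for x
    unfolding e_def using l summ[rule_format, of x] by (rule summable_stability_term)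
  have step: "norm (c *\<^sub>R doubling_defect f (s *\<^sub>R z) - doubling_defect f z) \<le> \<psi> z" for z
    unfolding c_def s_def \<psi>_def e_def
    by (rule norm_doubling_defect_dyadic_step[OF l odd[rule_format] approx[rule_format]])
  have "summable (\<lambda>n. c ^ n * \<psi> (s ^ n *\<^sub>R x))" for x
    unfolding series using summable by (rule summable_mult)
  from cubic_stability[OF dyadic_scaling[OF l, folded s_def c_def] odd[rule_format] approx[rule_format]
      step this lim0[rule_format, folded dyadic_powers s_def c_def]]
  obtain C where "\<forall>x. (\<lambda>n. c ^ n *\<^sub>R doubling_defect f (s ^ n *\<^sub>R x)) \<longlonglongrightarrow> C x"
    and "cubic C" "\<forall>x y. Dfun C x y = 0"
    and "\<forall>x. norm (doubling_defect f x - C x) \<le> (\<Sum>n. c ^ n * \<psi> (s ^ n *\<^sub>R x))"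
    and "\<forall>C'. cubic C' \<and> (\<forall>x. norm (doubling_defect f x - C' x) \<le> (\<Sum>n. c ^ n * \<psi> (s ^ n *\<^sub>R x)))
           \<longrightarrow> C' = C"
    by blast
  then show ?thesis
    unfolding doubling_defect_dyadic_iterate[OF l, folded s_def c_def] series suminf_mult[OF summable]
      Dfun_eq_0_iff[symmetric] Let_def e_def[symmetric] stability_term_def[symmetric]
      doubling_defect_def[of f, symmetric]
    by blast
qed

end
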